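(* Let $k\ge2$, $d=2k+1$, and let $u,v$ be smooth functions of $(x^1,\dots,x^{d})$ satisfying $$u_1+v_2=\sum_{s=2}^{k}(u_{2s-1}v_{2s}-u_{2s}v_{2s-1}),\qquad u_2+v_3=\sum_{s=2}^{k}(u_{2s}v_{2s+1}-u_{2s+1}v_{2s}).$$ For a parameter $\lambda$ set $\alpha_{2s-1}=1$, $\alpha_{2s}=\lambda$, and $$X=\partial_2+\lambda\partial_3-\sum_{i=3}^{2k}\alpha_i(u_i\partial_{i+1}-u_{i+1}\partial_i),\qquad Y=\partial_1+\lambda\partial_2+\sum_{i=3}^{2k}\alpha_i(v_i\partial_{i+1}-v_{i+1}\partial_i).$$ Then $[X,Y]=0$ for all $\lambda$.
   Context: $\partial_i=\partial/\partial x^i$, $u_i=\partial u/\partial x^i$, $v_i=\partial v/\partial x^i$; $[X,Y]$ is the Lie bracket of vector fields on the space of $x$'s. *)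

theory Defs
  imports "HOL-Analysis.Analysis"
begin

text \<open>Points of R^d are vectors of type real^'n; the coordinates x^1,...,x^d are
  identified with the elements of 'n through an enumeration e, which is a bijection
  from {1..d} onto the index type.\<close>

definition coord_enum :: "nat \<Rightarrow> (nat \<Rightarrow> 'n::finite) \<Rightarrow> bool" where
  "coord_enum d e \<longleftrightarrow> bij_betw e {1..d} (UNIV :: 'n set)"

definition pd :: "(nat \<Rightarrow> 'n::finite) \<Rightarrow> nat \<Rightarrow> (real^'n \<Rightarrow> real) \<Rightarrow> real^'n \<Rightarrow> real" where
  "pd e i f x = deriv (\<lambda>t. f (x + t *\<^sub>R axis (e i) 1)) 0"

fun ipd :: "(nat \<Rightarrow> 'n::finite) \<Rightarrow> nat list \<Rightarrow> (real^'n \<Rightarrow> real) \<Rightarrow> real^'n \<Rightarrow> real" where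
  "ipd e [] f = f"
| "ipd e (j # js) f = pd e j (ipd e js f)"

definition smooth :: "nat \<Rightarrow> (nat \<Rightarrow> 'n::finite) \<Rightarrow> (real^'n \<Rightarrow> real) \<Rightarrow> bool" where
  "smooth d e f \<longleftrightarrow> (\<forall>js. set js \<subseteq> {1..d} \<longrightarrow> (\<forall>x. ipd e js f differentiable (at x)))"

text \<open>A vector field is given by its coefficient functions: X i is the coefficient of
  the coordinate vector field for x^i (i = 1..d). Application to a function: X(f).\<close>
definition vf_apply :: "nat \<Rightarrow> (nat \<Rightarrow> 'n::finite) \<Rightarrow> (nat \<Rightarrow> real^'n \<Rightarrow> real) \<Rightarrow> (real^'n \<Rightarrow> real) \<Rightarrow> real^'n \<Rightarrow> real" where
  "vf_apply d e X f x = (\<Sum>i=1..d. X i x * pd e i f x)"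

definition lie_bracket :: "nat \<Rightarrow> (nat \<Rightarrow> 'n::finite) \<Rightarrow> (nat \<Rightarrow> real^'n \<Rightarrow> real) \<Rightarrow> (nat \<Rightarrow> real^'n \<Rightarrow> real) \<Rightarrow> nat \<Rightarrow> real^'n \<Rightarrow> real" where
  "lie_bracket d e X Y j x = vf_apply d e X (Y j) x - vf_apply d e Y (X j) x"

definition dvf :: "nat \<Rightarrow> nat \<Rightarrow> real^'n \<Rightarrow> real" where
  "dvf i = (\<lambda>j x. if j = i then 1 else 0)"

definition alpha :: "real \<Rightarrow> nat \<Rightarrow> real" where
  "alpha lam i = (if odd i then 1 else lam)"

definition fieldX :: "nat \<Rightarrow> (nat \<Rightarrow> 'n::finite) \<Rightarrow> real \<Rightarrow> (real^'n \<Rightarrow> real) \<Rightarrow> nat \<Rightarrow> real^'n \<Rightarrow> real" where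
  "fieldX k e lam u = (\<lambda>j x. dvf 2 j x + lam * dvf 3 j x
      - (\<Sum>i=3..2*k. alpha lam i * (pd e i u x * dvf (i+1) j x - pd e (i+1) u x * dvf i j x)))"

definition fieldY :: "nat \<Rightarrow> (nat \<Rightarrow> 'n::finite) \<Rightarrow> real \<Rightarrow> (real^'n \<Rightarrow> real) \<Rightarrow> nat \<Rightarrow> real^'n \<Rightarrow> real" where
  "fieldY k e lam v = (\<lambda>j x. dvf 1 j x + lam * dvf 2 j x
      + (\<Sum>i=3..2*k. alpha lam i * (pd e i v x * dvf (i+1) j x - pd e (i+1) v x * dvf i j x)))"

end

theory Submission
  imports Defs
begin

(* Let \<Omega>(p, q) = \<Sum>i=3..2k. \<alpha>_i (p_i q_(i+1) - p_(i+1) q_i) and let H_w be the field f \<mapsto> \<Omega>(\<nabla>w, \<nabla>f),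
   so that X = \<partial>_2 + \<lambda>\<partial>_3 - H_u and Y = \<partial>_1 + \<lambda>\<partial>_2 + H_v. The coefficients of H_w are linear in \<nabla>w
   with constant weights, hence the j-th coefficient of [X,Y] is \<Omega>(i \<mapsto> X(v_i) + Y(u_i), e_j).
   The hypotheses say exactly that D = u_1 + \<lambda>u_2 + v_2 + \<lambda>v_3 - \<Omega>(\<nabla>u, \<nabla>v) vanishes identically.
   Differentiating D along x^c, Schwarz's theorem and the antisymmetry of \<Omega> give \<partial>_c D = X(v_c) + Y(u_c),
   so every coefficient of [X,Y] vanishes. *)

section \<open>Symmetry of second partial derivatives\<close>

definition dir_deriv :: "'a::real_normed_vector \<Rightarrow> ('a \<Rightarrow> real) \<Rightarrow> 'a \<Rightarrow> real" where
  "dir_deriv w f y = deriv (\<lambda>t. f (y + t *\<^sub>R w)) 0"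

lemma dir_deriv_DERIV:
  fixes f :: "'a::real_normed_vector \<Rightarrow> real"
  assumes "f differentiable (at y)"
  shows "((\<lambda>t. f (y + t *\<^sub>R w)) has_real_derivative dir_deriv w f y) (at 0)"
proof -
  have "(\<lambda>t::real. y + t *\<^sub>R w) differentiable (at 0)"
    by (intro derivative_intros)
  then have "(f \<circ> (\<lambda>t::real. y + t *\<^sub>R w)) differentiable (at 0)"
    using assms by (intro differentiable_chain_at) simp_all
  then show ?thesis unfolding dir_deriv_def
    by (simp add: DERIV_deriv_iff_real_differentiable o_def)
qed

lemma dir_deriv_DERIV_along_line:
  fixes f :: "'a::real_normed_vector \<Rightarrow> real"
  assumes "\<And>z. f differentiable (at z)"
  shows "((\<lambda>s. f (y + s *\<^sub>R w)) has_real_derivative dir_deriv w f (y + s *\<^sub>R w)) (at s)"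
proof -
  have "((\<lambda>t. f ((y + s *\<^sub>R w) + t *\<^sub>R w)) has_real_derivative dir_deriv w f (y + s *\<^sub>R w)) (at 0)"
    using dir_deriv_DERIV assms by blast
  moreover have "(\<lambda>t. f ((y + s *\<^sub>R w) + t *\<^sub>R w)) = (\<lambda>t. f (y + (t + s) *\<^sub>R w))"
    by (simp add: scaleR_add_left algebra_simps)
  ultimately show ?thesis
    using DERIV_shift[of "\<lambda>s. f (y + s *\<^sub>R w)" _ 0 s] by simp
qed

lemma second_difference_mean_value:
  fixes f :: "'a::real_normed_vector \<Rightarrow> real"
  assumes f: "\<And>z. f differentiable (at z)" and fa: "\<And>z. dir_deriv a f differentiable (at z)"
    and h: "0 < h"
  obtains \<xi> \<eta> where "0 < \<xi>" "\<xi> < h" "0 < \<eta>" "\<eta> < h"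
    "f (x + h *\<^sub>R a + h *\<^sub>R b) - f (x + h *\<^sub>R a) - f (x + h *\<^sub>R b) + f x
       = h * h * dir_deriv b (dir_deriv a f) (x + \<xi> *\<^sub>R a + \<eta> *\<^sub>R b)"
proof -
  define \<phi> where "\<phi> s = f ((x + h *\<^sub>R b) + s *\<^sub>R a) - f (x + s *\<^sub>R a)" for s
  have "(\<phi> has_real_derivative
      dir_deriv a f ((x + h *\<^sub>R b) + s *\<^sub>R a) - dir_deriv a f (x + s *\<^sub>R a)) (at s)" for s
    unfolding \<phi>_def[abs_def] by (intro DERIV_diff dir_deriv_DERIV_along_line f)
  from MVT2[OF h this] obtain \<xi> where \<xi>: "0 < \<xi>" "\<xi> < h"
    and \<phi>_mvt: "\<phi> h - \<phi> 0 = h * (dir_deriv a f ((x + h *\<^sub>R b) + \<xi> *\<^sub>R a) - dir_deriv a f (x + \<xi> *\<^sub>R a))"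
    by auto
  define \<psi> where "\<psi> t = dir_deriv a f ((x + \<xi> *\<^sub>R a) + t *\<^sub>R b)" for t
  have "(\<psi> has_real_derivative dir_deriv b (dir_deriv a f) ((x + \<xi> *\<^sub>R a) + t *\<^sub>R b)) (at t)" for t
    unfolding \<psi>_def[abs_def] by (intro dir_deriv_DERIV_along_line fa)
  from MVT2[OF h this] obtain \<eta> where \<eta>: "0 < \<eta>" "\<eta> < h"
    and \<psi>_mvt: "\<psi> h - \<psi> 0 = h * dir_deriv b (dir_deriv a f) ((x + \<xi> *\<^sub>R a) + \<eta> *\<^sub>R b)"
    by auto
  have "f (x + h *\<^sub>R a + h *\<^sub>R b) - f (x + h *\<^sub>R a) - f (x + h *\<^sub>R b) + f x = \<phi> h - \<phi> 0"
    unfolding \<phi>_def by (simp add: algebra_simps)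
  also have "\<dots> = h * (\<psi> h - \<psi> 0)"
    using \<phi>_mvt unfolding \<psi>_def by (simp add: algebra_simps)
  also have "\<dots> = h * h * dir_deriv b (dir_deriv a f) (x + \<xi> *\<^sub>R a + \<eta> *\<^sub>R b)"
    using \<psi>_mvt by simp
  finally show ?thesis using \<xi> \<eta> that by blast
qed

lemma dist_parallelogram_le:
  fixes x a b :: "'a::real_normed_vector"
  assumes "0 < \<xi>" "\<xi> < h" "0 < \<eta>" "\<eta> < h"
  shows "dist (x + \<xi> *\<^sub>R a + \<eta> *\<^sub>R b) x \<le> h * (norm a + norm b)"
proof -
  have "dist (x + \<xi> *\<^sub>R a + \<eta> *\<^sub>R b) x \<le> \<xi> * norm a + \<eta> * norm b"
    using assms norm_triangle_ineq[of "\<xi> *\<^sub>R a" "\<eta> *\<^sub>R b"] by (simp add: dist_norm)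
  also have "\<dots> \<le> h * (norm a + norm b)"
    using assms by (simp add: distrib_left add_mono mult_right_mono)
  finally show ?thesis .
qed

lemma mixed_dir_derivs_agree_nearby:
  fixes f :: "'a::real_normed_vector \<Rightarrow> real"
  assumes f: "\<And>z. f differentiable (at z)"
    and fa: "\<And>z. dir_deriv a f differentiable (at z)"
    and fb: "\<And>z. dir_deriv b f differentiable (at z)"
    and h: "0 < h"
  obtains p p' where "dist p x \<le> h * (norm a + norm b)" "dist p' x \<le> h * (norm a + norm b)"
    "dir_deriv b (dir_deriv a f) p = dir_deriv a (dir_deriv b f) p'"
proof -
  obtain \<xi> \<eta> where \<xi>\<eta>: "0 < \<xi>" "\<xi> < h" "0 < \<eta>" "\<eta> < h" and ab:
    "f (x + h *\<^sub>R a + h *\<^sub>R b) - f (x + h *\<^sub>R a) - f (x + h *\<^sub>R b) + f x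
       = h * h * dir_deriv b (dir_deriv a f) (x + \<xi> *\<^sub>R a + \<eta> *\<^sub>R b)"
    using second_difference_mean_value[OF f fa h] .
  obtain \<xi>' \<eta>' where \<xi>'\<eta>': "0 < \<xi>'" "\<xi>' < h" "0 < \<eta>'" "\<eta>' < h" and ba:
    "f (x + h *\<^sub>R b + h *\<^sub>R a) - f (x + h *\<^sub>R b) - f (x + h *\<^sub>R a) + f x
       = h * h * dir_deriv a (dir_deriv b f) (x + \<xi>' *\<^sub>R b + \<eta>' *\<^sub>R a)"
    using second_difference_mean_value[OF f fb h] .
  have swap: "x + h *\<^sub>R b + h *\<^sub>R a = x + h *\<^sub>R a + h *\<^sub>R b" by (simp add: algebra_simps)
  have "h * h * dir_deriv b (dir_deriv a f) (x + \<xi> *\<^sub>R a + \<eta> *\<^sub>R b)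
      = h * h * dir_deriv a (dir_deriv b f) (x + \<xi>' *\<^sub>R b + \<eta>' *\<^sub>R a)"
    using ab ba unfolding swap by linarith
  with h have "dir_deriv b (dir_deriv a f) (x + \<xi> *\<^sub>R a + \<eta> *\<^sub>R b)
      = dir_deriv a (dir_deriv b f) (x + \<xi>' *\<^sub>R b + \<eta>' *\<^sub>R a)"
    by simp
  moreover have "dist (x + \<xi>' *\<^sub>R b + \<eta>' *\<^sub>R a) x \<le> h * (norm a + norm b)"
    using dist_parallelogram_le[OF \<xi>'\<eta>', of x b a] by (simp add: add.commute)
  ultimately show ?thesis
    using that dist_parallelogram_le[OF \<xi>\<eta>, of x a b] by blast
qed

text \<open>Schwarz's theorem: both mixed derivatives are values of second differences over arbitrarily
  small parallelograms, so by continuity they cannot differ at x.\<close>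

lemma dir_deriv_commute:
  fixes f :: "'a::real_normed_vector \<Rightarrow> real"
  assumes f: "\<And>z. f differentiable (at z)"
    and fa: "\<And>z. dir_deriv a f differentiable (at z)"
    and fb: "\<And>z. dir_deriv b f differentiable (at z)"
    and cont_ab: "isCont (dir_deriv b (dir_deriv a f)) x"
    and cont_ba: "isCont (dir_deriv a (dir_deriv b f)) x"
  shows "dir_deriv b (dir_deriv a f) x = dir_deriv a (dir_deriv b f) x"
proof (rule ccontr)
  let ?g = "dir_deriv b (dir_deriv a f)" and ?g' = "dir_deriv a (dir_deriv b f)"
  assume "?g x \<noteq> ?g' x"
  define \<epsilon> where "\<epsilon> = dist (?g x) (?g' x) / 2"
  have "\<epsilon> > 0" using \<open>?g x \<noteq> ?g' x\<close> by (simp add: \<epsilon>_def)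
  obtain \<delta>1 where "\<delta>1 > 0" and \<delta>1: "\<And>y. dist y x < \<delta>1 \<Longrightarrow> dist (?g y) (?g x) < \<epsilon>"
    using cont_ab[unfolded continuous_at_eps_delta, rule_format, OF \<open>\<epsilon> > 0\<close>] by auto
  obtain \<delta>2 where "\<delta>2 > 0" and \<delta>2: "\<And>y. dist y x < \<delta>2 \<Longrightarrow> dist (?g' y) (?g' x) < \<epsilon>"
    using cont_ba[unfolded continuous_at_eps_delta, rule_format, OF \<open>\<epsilon> > 0\<close>] by auto
  define \<delta> where "\<delta> = min \<delta>1 \<delta>2"
  have "\<delta> > 0" using \<open>\<delta>1 > 0\<close> \<open>\<delta>2 > 0\<close> by (simp add: \<delta>_def)
  define h where "h = \<delta> / (norm a + norm b + 1)"
  have N: "0 < norm a + norm b + 1" by (simp add: add_nonneg_pos)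
  with \<open>\<delta> > 0\<close> have "0 < h" unfolding h_def by (rule divide_pos_pos)
  then have "h * (norm a + norm b) < h * (norm a + norm b + 1)" by simp
  also have "\<dots> = \<delta>" using N by (simp add: h_def)
  finally have h_small: "h * (norm a + norm b) < \<delta>" .
  obtain p p' where "dist p x \<le> h * (norm a + norm b)" "dist p' x \<le> h * (norm a + norm b)"
    and eq: "?g p = ?g' p'"
    using mixed_dir_derivs_agree_nearby[OF f fa fb \<open>0 < h\<close>] .
  with h_small have close: "dist p x < \<delta>1" "dist p' x < \<delta>2"
    unfolding \<delta>_def by auto
  have "dist (?g p) (?g' x) < \<epsilon>"
    unfolding eq using \<delta>2[OF close(2)] .
  moreover have "dist (?g p) (?g x) < \<epsilon>"
    using \<delta>1[OF close(1)] .
  ultimately show False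
    using dist_triangle3[of "?g x" "?g' x" "?g p"] \<epsilon>_def by linarith
qed

lemma pd_eq_dir_deriv: "pd e i f = dir_deriv (axis (e i) 1) f"
  by (rule ext) (simp add: pd_def dir_deriv_def)

lemma pd_DERIV:
  "f differentiable (at x) \<Longrightarrow> ((\<lambda>t. f (x + t *\<^sub>R axis (e i) 1)) has_real_derivative pd e i f x) (at 0)"
  unfolding pd_eq_dir_deriv by (rule dir_deriv_DERIV)

lemma pd_eqI: "((\<lambda>t. f (x + t *\<^sub>R axis (e i) 1)) has_real_derivative D) (at 0) \<Longrightarrow> pd e i f x = D"
  by (simp add: pd_def DERIV_imp_deriv)

lemma pd_const: "pd e i (\<lambda>y. c) x = 0"
  by (rule pd_eqI) simp

lemma smooth_ipd_differentiable:
  "smooth d e f \<Longrightarrow> set js \<subseteq> {1..d} \<Longrightarrow> ipd e js f differentiable (at x)"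
  unfolding smooth_def by blast

lemma smooth_pd_commute:
  assumes "smooth d e f" "i \<in> {1..d}" "m \<in> {1..d}"
  shows "pd e i (pd e m f) x = pd e m (pd e i f) x"
proof -
  have "{i, m} \<subseteq> {1..d}" using assms(2,3) by simp
  then have diff: "ipd e js f differentiable (at y)" if "set js \<subseteq> {i, m}" for js y
    using smooth_ipd_differentiable[OF assms(1) order_trans[OF that]] by blast
  have "f differentiable (at y)"
    and "dir_deriv (axis (e i) 1) f differentiable (at y)"
    and "dir_deriv (axis (e m) 1) f differentiable (at y)"
    and "dir_deriv (axis (e i) 1) (dir_deriv (axis (e m) 1) f) differentiable (at y)"
    and "dir_deriv (axis (e m) 1) (dir_deriv (axis (e i) 1) f) differentiable (at y)" for y
    using diff[of "[]"] diff[of "[i]"] diff[of "[m]"] diff[of "[i, m]"] diff[of "[m, i]"]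
    by (simp_all add: pd_eq_dir_deriv)
  then show ?thesis
    unfolding pd_eq_dir_deriv
    by (intro dir_deriv_commute differentiable_imp_continuous_within) assumption+
qed

section \<open>The skew form and the fields X and Y\<close>

abbreviation (input) grad :: "(nat \<Rightarrow> 'n::finite) \<Rightarrow> (real^'n \<Rightarrow> real) \<Rightarrow> real^'n \<Rightarrow> nat \<Rightarrow> real" where
  "grad e f x \<equiv> (\<lambda>i. pd e i f x)"

definition skew_form :: "nat set \<Rightarrow> (nat \<Rightarrow> real) \<Rightarrow> (nat \<Rightarrow> real) \<Rightarrow> (nat \<Rightarrow> real) \<Rightarrow> real" where
  "skew_form I a p q = (\<Sum>i\<in>I. a i * (p i * q (i+1) - p (i+1) * q i))"

lemma skew_form_cong:
  assumes "\<And>i. i \<in> I \<union> Suc ` I \<Longrightarrow> p i = p' i" "\<And>i. i \<in> I \<union> Suc ` I \<Longrightarrow> q i = q' i"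
  shows "skew_form I a p q = skew_form I a p' q'"
  unfolding skew_form_def using assms by (intro sum.cong) auto

lemma skew_form_antisym: "skew_form I a q p = - skew_form I a p q"
  unfolding skew_form_def by (simp add: sum_negf[symmetric] algebra_simps)

lemma skew_form_add_left: "skew_form I a (\<lambda>i. p i + p' i) q = skew_form I a p q + skew_form I a p' q"
  unfolding skew_form_def by (simp add: sum.distrib[symmetric] algebra_simps)

lemma skew_form_sum_left:
  "skew_form I a (\<lambda>i. \<Sum>m\<in>M. c m * g m i) q = (\<Sum>m\<in>M. c m * skew_form I a (g m) q)"
  unfolding skew_form_def
  by (simp add: sum_distrib_left sum_distrib_right sum_subtractf[symmetric] algebra_simps sum.swap[of _ I])

lemma skew_form_zero_left:
  "(\<And>i. i \<in> I \<union> Suc ` I \<Longrightarrow> p i = 0) \<Longrightarrow> skew_form I a p q = 0"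
  using skew_form_cong[of I p "\<lambda>_. 0" q q a] by (simp add: skew_form_def)

lemma sum_skew_form_dvf:
  assumes "finite J" "I \<subseteq> J" "Suc ` I \<subseteq> J"
  shows "(\<Sum>j\<in>J. skew_form I a p (\<lambda>i. dvf i j y) * q j) = skew_form I a p q"
proof -
  have "(\<Sum>j\<in>J. skew_form I a p (\<lambda>i. dvf i j y) * q j)
      = (\<Sum>i\<in>I. \<Sum>j\<in>J. a i * (p i * (if j = i+1 then q j else 0) - p (i+1) * (if j = i then q j else 0)))"
    unfolding sum.swap[of _ J] skew_form_def sum_distrib_right
    by (intro sum.cong refl) (simp add: dvf_def algebra_simps)
  also have "\<dots> = skew_form I a p q"
    unfolding skew_form_def
  proof (intro sum.cong refl)
    fix i assume "i \<in> I"
    then have "i \<in> J" "i + 1 \<in> J" using assms(2,3) by auto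
    then show "(\<Sum>j\<in>J. a i * (p i * (if j = i+1 then q j else 0) - p (i+1) * (if j = i then q j else 0)))
        = a i * (p i * q (i+1) - p (i+1) * q i)"
      using assms(1) by (simp add: sum_subtractf sum_distrib_left[symmetric] sum.delta')
  qed
  finally show ?thesis .
qed

lemma DERIV_skew_form:
  assumes "finite I"
    and "\<And>i. i \<in> I \<union> Suc ` I \<Longrightarrow> ((\<lambda>t. P t i) has_real_derivative P' i) (at t)"
    and "\<And>i. i \<in> I \<union> Suc ` I \<Longrightarrow> ((\<lambda>t. Q t i) has_real_derivative Q' i) (at t)"
  shows "((\<lambda>t. skew_form I a (P t) (Q t)) has_real_derivative
      skew_form I a P' (Q t) + skew_form I a (P t) Q') (at t)"
proof -
  have "((\<lambda>t. skew_form I a (P t) (Q t)) has_real_derivative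
      (\<Sum>i\<in>I. a i * ((P' i * Q t (i+1) + Q' (i+1) * P t i) - (P' (i+1) * Q t i + Q' i * P t (i+1))))) (at t)"
    unfolding skew_form_def by (intro DERIV_sum DERIV_cmult DERIV_diff DERIV_mult assms) auto
  then show ?thesis
    by (simp add: skew_form_def sum.distrib[symmetric] algebra_simps)
qed

lemma sum_dvf:
  assumes "finite J" "i \<in> J"
  shows "(\<Sum>j\<in>J. dvf i j y * g j) = g i"
proof -
  have "(\<Sum>j\<in>J. dvf i j y * g j) = (\<Sum>j\<in>J. if i = j then g j else 0)"
    by (intro sum.cong) (auto simp: dvf_def)
  then show ?thesis using assms by simp
qed

lemma fieldX_eq_skew_form:
  "fieldX k e lam u j y = dvf 2 j y + lam * dvf 3 j y - skew_form {3..2*k} (alpha lam) (grad e u y) (\<lambda>i. dvf i j y)"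
  by (simp add: fieldX_def skew_form_def)

lemma fieldY_eq_skew_form:
  "fieldY k e lam v j y = dvf 1 j y + lam * dvf 2 j y + skew_form {3..2*k} (alpha lam) (grad e v y) (\<lambda>i. dvf i j y)"
  by (simp add: fieldY_def skew_form_def)

lemma vf_apply_fieldX:
  assumes "k \<ge> 1"
  shows "vf_apply (2*k+1) e (fieldX k e lam u) f x
    = pd e 2 f x + lam * pd e 3 f x - skew_form {3..2*k} (alpha lam) (grad e u x) (grad e f x)"
proof -
  let ?J = "{1..2*k+1}" and ?\<Omega> = "skew_form {3..2*k} (alpha lam)"
  have "vf_apply (2*k+1) e (fieldX k e lam u) f x
      = (\<Sum>j\<in>?J. dvf 2 j x * pd e j f x) + lam * (\<Sum>j\<in>?J. dvf 3 j x * pd e j f x)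
        - (\<Sum>j\<in>?J. ?\<Omega> (grad e u x) (\<lambda>i. dvf i j x) * pd e j f x)"
    unfolding vf_apply_def fieldX_eq_skew_form
    by (simp add: ring_distribs sum.distrib sum_subtractf sum_distrib_left mult.assoc)
  also have "\<dots> = pd e 2 f x + lam * pd e 3 f x - ?\<Omega> (grad e u x) (grad e f x)"
  proof -
    have J: "finite ?J" "2 \<in> ?J" "3 \<in> ?J" "{3..2*k} \<subseteq> ?J" "Suc ` {3..2*k} \<subseteq> ?J"
      using assms by auto
    show ?thesis
      by (simp only: sum_dvf[OF J(1,2)] sum_dvf[OF J(1,3)] sum_skew_form_dvf[OF J(1,4,5)])
  qed
  finally show ?thesis .
qed

lemma vf_apply_fieldY:
  assumes "k \<ge> 1"
  shows "vf_apply (2*k+1) e (fieldY k e lam v) f x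
    = pd e 1 f x + lam * pd e 2 f x + skew_form {3..2*k} (alpha lam) (grad e v x) (grad e f x)"
proof -
  let ?J = "{1..2*k+1}" and ?\<Omega> = "skew_form {3..2*k} (alpha lam)"
  have "vf_apply (2*k+1) e (fieldY k e lam v) f x
      = (\<Sum>j\<in>?J. dvf 1 j x * pd e j f x) + lam * (\<Sum>j\<in>?J. dvf 2 j x * pd e j f x)
        + (\<Sum>j\<in>?J. ?\<Omega> (grad e v x) (\<lambda>i. dvf i j x) * pd e j f x)"
    unfolding vf_apply_def fieldY_eq_skew_form
    by (simp add: ring_distribs sum.distrib sum_distrib_left mult.assoc)
  also have "\<dots> = pd e 1 f x + lam * pd e 2 f x + ?\<Omega> (grad e v x) (grad e f x)"
  proof -
    have J: "finite ?J" "1 \<in> ?J" "2 \<in> ?J" "{3..2*k} \<subseteq> ?J" "Suc ` {3..2*k} \<subseteq> ?J"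
      using assms by auto
    show ?thesis
      by (simp only: sum_dvf[OF J(1,2)] sum_dvf[OF J(1,3)] sum_skew_form_dvf[OF J(1,4,5)])
  qed
  finally show ?thesis .
qed

lemma pd_skew_form_affine:
  assumes "finite I" and diff: "\<And>i y. i \<in> I \<union> Suc ` I \<Longrightarrow> pd e i w differentiable (at y)"
  shows "pd e m (\<lambda>y. c + s * skew_form I a (grad e w y) q) x
    = s * skew_form I a (\<lambda>i. pd e m (pd e i w) x) q"
proof (rule pd_eqI)
  have "((\<lambda>t. skew_form I a (grad e w (x + t *\<^sub>R axis (e m) 1)) q) has_real_derivative
      skew_form I a (\<lambda>i. pd e m (pd e i w) x) q + skew_form I a (grad e w (x + 0 *\<^sub>R axis (e m) 1)) (\<lambda>_. 0)) (at 0)"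
    using assms(1) by (rule DERIV_skew_form) (simp_all add: pd_DERIV diff)
  then have "((\<lambda>t. skew_form I a (grad e w (x + t *\<^sub>R axis (e m) 1)) q) has_real_derivative
      skew_form I a (\<lambda>i. pd e m (pd e i w) x) q) (at 0)"
    by (simp add: skew_form_def)
  from DERIV_add[OF DERIV_const DERIV_cmult[OF this]]
  show "((\<lambda>t. c + s * skew_form I a (grad e w (x + t *\<^sub>R axis (e m) 1)) q) has_real_derivative
      s * skew_form I a (\<lambda>i. pd e m (pd e i w) x) q) (at 0)"
    by simp
qed

lemma vf_apply_skew_form_affine:
  assumes "finite I" "\<And>i y. i \<in> I \<union> Suc ` I \<Longrightarrow> pd e i w differentiable (at y)"
  shows "vf_apply d e Z (\<lambda>y. c + s * skew_form I a (grad e w y) q) x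
    = s * skew_form I a (\<lambda>i. vf_apply d e Z (pd e i w) x) q"
proof -
  have "vf_apply d e Z (\<lambda>y. c + s * skew_form I a (grad e w y) q) x
      = (\<Sum>m=1..d. Z m x * (s * skew_form I a (\<lambda>i. pd e m (pd e i w) x) q))"
    unfolding vf_apply_def by (simp only: pd_skew_form_affine[OF assms])
  also have "\<dots> = s * skew_form I a (\<lambda>i. vf_apply d e Z (pd e i w) x) q"
    unfolding vf_apply_def skew_form_sum_left sum_distrib_left by (simp add: mult.left_commute)
  finally show ?thesis .
qed

lemma DERIV_skew_form_grad:
  assumes "finite I"
    and "\<And>i y. i \<in> I \<union> Suc ` I \<Longrightarrow> pd e i f differentiable (at y)"
    and "\<And>i y. i \<in> I \<union> Suc ` I \<Longrightarrow> pd e i g differentiable (at y)"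
  shows "((\<lambda>t. skew_form I a (grad e f (x + t *\<^sub>R axis (e c) 1)) (grad e g (x + t *\<^sub>R axis (e c) 1)))
    has_real_derivative skew_form I a (\<lambda>i. pd e c (pd e i f) x) (grad e g x)
      + skew_form I a (grad e f x) (\<lambda>i. pd e c (pd e i g) x)) (at 0)"
  using DERIV_skew_form[OF assms(1), of "\<lambda>t. grad e f (x + t *\<^sub>R axis (e c) 1)" _ 0
      "\<lambda>t. grad e g (x + t *\<^sub>R axis (e c) 1)"]
  by (simp add: pd_DERIV assms(2,3))

lemma sum_consecutive_pairs:
  fixes g :: "nat \<Rightarrow> 'a::comm_monoid_add"
  shows "(\<Sum>i = Suc (2*m)..2*n. g i) = (\<Sum>j = Suc m..n. g (2 * j - 1) + g (2 * j))"
proof (induction n)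
  case (Suc n)
  show ?case
  proof (cases "m \<le> n")
    case True
    then have "(\<Sum>i = Suc (2*m)..2 * Suc n. g i) = (\<Sum>i = Suc (2*m)..2*n. g i) + (g (2*n+1) + g (2*n+2))"
      by (simp add: sum.cl_ivl_Suc add.assoc)
    with True Suc.IH show ?thesis by (simp add: sum.cl_ivl_Suc)
  qed simp
qed simp

lemma skew_form_alpha_split:
  "skew_form {3..2*k} (alpha lam) p q
    = (\<Sum>j=2..k. p (2 * j - 1) * q (2 * j) - p (2 * j) * q (2 * j - 1))
      + lam * (\<Sum>j=2..k. p (2 * j) * q (2 * j + 1) - p (2 * j + 1) * q (2 * j))"
proof -
  have pairs: "(\<Sum>i=3..2*k. g i) = (\<Sum>j=2..k. g (2 * j - 1) + g (2 * j))" for g :: "nat \<Rightarrow> real"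
  proof -
    have "Suc (2*1) = (3::nat)" "Suc 1 = (2::nat)" by simp_all
    then show ?thesis using sum_consecutive_pairs[where m=1 and n=k and g=g] by (simp only:)
  qed
  have "skew_form {3..2*k} (alpha lam) p q = (\<Sum>j=2..k.
      alpha lam (2 * j - 1) * (p (2 * j - 1) * q (2 * j - 1 + 1) - p (2 * j - 1 + 1) * q (2 * j - 1))
      + alpha lam (2 * j) * (p (2 * j) * q (2 * j + 1) - p (2 * j + 1) * q (2 * j)))"
    unfolding skew_form_def pairs ..
  also have "\<dots> = (\<Sum>j=2..k. (p (2 * j - 1) * q (2 * j) - p (2 * j) * q (2 * j - 1))
      + lam * (p (2 * j) * q (2 * j + 1) - p (2 * j + 1) * q (2 * j)))"
    by (intro sum.cong) (auto simp: alpha_def)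
  finally show ?thesis by (simp add: sum.distrib sum_distrib_left)
qed

definition integrability_defect ::
    "nat \<Rightarrow> (nat \<Rightarrow> 'n::finite) \<Rightarrow> real \<Rightarrow> (real^'n \<Rightarrow> real) \<Rightarrow> (real^'n \<Rightarrow> real) \<Rightarrow> real^'n \<Rightarrow> real" where
  "integrability_defect k e lam u v y = pd e 1 u y + lam * pd e 2 u y + pd e 2 v y + lam * pd e 3 v y
     - skew_form {3..2*k} (alpha lam) (grad e u y) (grad e v y)"

lemma integrability_defect_eq_zero:
  assumes "pd e 1 u y + pd e 2 v y =
      (\<Sum>j=2..k. pd e (2 * j - 1) u y * pd e (2 * j) v y - pd e (2 * j) u y * pd e (2 * j - 1) v y)"
    and "pd e 2 u y + pd e 3 v y =
      (\<Sum>j=2..k. pd e (2 * j) u y * pd e (2 * j + 1) v y - pd e (2 * j + 1) u y * pd e (2 * j) v y)"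
  shows "integrability_defect k e lam u v y = 0"
proof -
  have "skew_form {3..2*k} (alpha lam) (grad e u y) (grad e v y)
      = (pd e 1 u y + pd e 2 v y) + lam * (pd e 2 u y + pd e 3 v y)"
    by (simp only: skew_form_alpha_split assms[symmetric])
  then show ?thesis by (simp add: integrability_defect_def algebra_simps)
qed

lemma pd_integrability_defect:
  assumes k: "k \<ge> 1" and u: "smooth (2*k+1) e u" and v: "smooth (2*k+1) e v"
    and c: "c \<in> {1..2*k+1}"
  shows "pd e c (integrability_defect k e lam u v) x
    = vf_apply (2*k+1) e (fieldX k e lam u) (pd e c v) x + vf_apply (2*k+1) e (fieldY k e lam v) (pd e c u) x"
proof -
  let ?\<Omega> = "skew_form {3..2*k} (alpha lam)"
  have diff: "pd e i w differentiable (at y)" if "smooth (2*k+1) e w" "i \<in> {1..2*k+1}" for w i y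
    using smooth_ipd_differentiable[OF that(1), of "[i]"] that(2) by simp
  have comm: "pd e i (pd e c w) x = pd e c (pd e i w) x" if "smooth (2*k+1) e w" "i \<in> {1..2*k+1}" for w i
    using smooth_pd_commute[OF that c] .
  have "pd e c (integrability_defect k e lam u v) x
    = pd e c (pd e 1 u) x + lam * pd e c (pd e 2 u) x + pd e c (pd e 2 v) x + lam * pd e c (pd e 3 v) x
        - (?\<Omega> (\<lambda>i. pd e c (pd e i u) x) (grad e v x) + ?\<Omega> (grad e u x) (\<lambda>i. pd e c (pd e i v) x))"
    unfolding integrability_defect_def[abs_def]
    by (intro pd_eqI DERIV_diff DERIV_add DERIV_cmult pd_DERIV DERIV_skew_form_grad diff u v) (use k in auto)
  also have "\<dots> = vf_apply (2*k+1) e (fieldX k e lam u) (pd e c v) x + vf_apply (2*k+1) e (fieldY k e lam v) (pd e c u) x"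
  proof -
    have "?\<Omega> (\<lambda>i. pd e c (pd e i u) x) (grad e v x) = ?\<Omega> (grad e (pd e c u) x) (grad e v x)"
      "?\<Omega> (grad e u x) (\<lambda>i. pd e c (pd e i v) x) = ?\<Omega> (grad e u x) (grad e (pd e c v) x)"
      using k by (auto intro!: skew_form_cong comm[symmetric] u v)
    then show ?thesis
      using k comm[OF u, of 1] comm[OF u, of 2] comm[OF v, of 2] comm[OF v, of 3]
      unfolding vf_apply_fieldX[OF k] vf_apply_fieldY[OF k] skew_form_antisym[of _ _ "grad e v x"]
      by simp
  qed
  finally show ?thesis .
qed

lemma lie_bracket_fieldX_fieldY:
  assumes k: "k \<ge> 1" and u: "smooth (2*k+1) e u" and v: "smooth (2*k+1) e v"
  shows "lie_bracket (2*k+1) e (fieldX k e lam u) (fieldY k e lam v) j x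
    = skew_form {3..2*k} (alpha lam)
        (\<lambda>i. vf_apply (2*k+1) e (fieldX k e lam u) (pd e i v) x + vf_apply (2*k+1) e (fieldY k e lam v) (pd e i u) x)
        (\<lambda>i. dvf i j x)"
proof -
  let ?\<Omega> = "skew_form {3..2*k} (alpha lam)" and ?X = "fieldX k e lam u" and ?Y = "fieldY k e lam v"
  have diff: "pd e i w differentiable (at y)" if "smooth (2*k+1) e w" "i \<in> {3..2*k} \<union> Suc ` {3..2*k}" for w i y
    using smooth_ipd_differentiable[OF that(1), of "[i]"] that(2) by auto
  have "?Y j = (\<lambda>y. (dvf 1 j x + lam * dvf 2 j x) + 1 * ?\<Omega> (grad e v y) (\<lambda>i. dvf i j x))"
    by (simp add: fun_eq_iff fieldY_eq_skew_form dvf_def)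
  then have XY: "vf_apply (2*k+1) e ?X (?Y j) x = 1 * ?\<Omega> (\<lambda>i. vf_apply (2*k+1) e ?X (pd e i v) x) (\<lambda>i. dvf i j x)"
    by (simp only:) (rule vf_apply_skew_form_affine[OF _ diff[OF v]], simp_all)
  have "?X j = (\<lambda>y. (dvf 2 j x + lam * dvf 3 j x) + (-1) * ?\<Omega> (grad e u y) (\<lambda>i. dvf i j x))"
    by (simp add: fun_eq_iff fieldX_eq_skew_form dvf_def)
  then have YX: "vf_apply (2*k+1) e ?Y (?X j) x = (-1) * ?\<Omega> (\<lambda>i. vf_apply (2*k+1) e ?Y (pd e i u) x) (\<lambda>i. dvf i j x)"
    by (simp only:) (rule vf_apply_skew_form_affine[OF _ diff[OF u]], simp_all)
  show ?thesis
    unfolding lie_bracket_def XY YX skew_form_add_left by simp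
qed

theorem mainTheorem7:
  fixes k :: nat and e :: "nat \<Rightarrow> 'n::finite" and u v :: "real^'n \<Rightarrow> real"
  assumes "k \<ge> 2"
    and "coord_enum (2*k+1) e"
    and "smooth (2*k+1) e u" and "smooth (2*k+1) e v"
    and "\<And>x. pd e 1 u x + pd e 2 v x =
           (\<Sum>s=2..k. (pd e (2 * s-1) u x * pd e (2 * s) v x) - (pd e (2 * s) u x * pd e (2 * s-1) v x))"
    and "\<And>x. pd e 2 u x + pd e 3 v x =
           (\<Sum>s=2..k. (pd e (2 * s) u x * pd e (2 * s+1) v x) - (pd e (2 * s+1) u x * pd e (2 * s) v x))"
  shows "\<forall>lam::real. \<forall>j\<in>{1..2*k+1}. \<forall>x.
           lie_bracket (2*k+1) e (fieldX k e lam u) (fieldY k e lam v) j x = 0"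
proof (intro allI ballI)
  fix lam :: real and j x
  have k: "k \<ge> 1" using assms(1) by simp
  have "integrability_defect k e lam u v = (\<lambda>_. 0)"
    using integrability_defect_eq_zero[OF assms(5,6)] by (simp add: fun_eq_iff)
  then have "vf_apply (2*k+1) e (fieldX k e lam u) (pd e i v) x
      + vf_apply (2*k+1) e (fieldY k e lam v) (pd e i u) x = 0" if "i \<in> {1..2*k+1}" for i
    using pd_integrability_defect[OF k assms(3,4) that, of lam x] by (simp add: pd_const)
  then show "lie_bracket (2*k+1) e (fieldX k e lam u) (fieldY k e lam v) j x = 0"
    unfolding lie_bracket_fieldX_fieldY[OF k assms(3,4)] by (intro skew_form_zero_left) auto
qed

end
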